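(* Let $G$ be a group of order $k$. The ideal $I(G,* )$ of graded $*$-identities of $M_k(\mathbb{C})$ with the $G$-crossed-product grading and the transpose involution is generated as a $(T,* )$-ideal by the elements (1) $x_{i,e}x_{j,e}-x_{j,e}x_{i,e}$ for all $i,j\ge1$, and (2) $x_{i,e}-x_{i,e}^*$ for all $i\ge1$.
   Context: Let $G=\{g_1=e,\dots,g_k\}$ be a finite group of order $k$. Index rows/columns of $k\times k$ matrices by $G$, let $E_{a,b}$ be the matrix units, $P_g=\sum_{h\in G}E_{h,hg}$, and let $M_k(\mathbb{C})_g=\{DP_g: D\text{ diagonal}\}$ (the $G$-crossed-product grading); the involution $*$ is the transpose. $F=\mathbb{Q}\{x_{i,g},x^*_{i,g}: i\ge1,g\in G\}$ is the free associative algebra with involution $*$ (the anti-automorphism exchanging $x_{i,g}$ and $x^*_{i,g}$) and grading $\deg x_{i,g}=g$, $\deg x^*_{i,g}=g^{-1}$. $I(G,* )$ is the set of $f\in F$ vanishing under every substitution $x_{i,g}\mapsto A_{i,g}\in M_k(\mathbb{C})_g$, $x^*_{i,g}\mapsto A_{i,g}^T$. A $(T,* )$-ideal is an ideal of $F$ stable under $*$ and under every algebra endomorphism $\varphi$ of $F$ with $\varphi(x_{i,g})$ homogeneous of degree $g$ and $\varphi(x^*_{i,g})=\varphi(x_{i,g})^*$; the $(T,* )$-ideal generated by a set is the smallest $(T,* )$-ideal containing it. *)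

theory Defs
  imports Complex_Main
begin

text \<open>The group G is a finite type of class group_add (written additively:
  e = 0, gh = g + h, g^{-1} = - g).\<close>

datatype 'g letter = X nat 'g | Xs nat 'g

fun idx :: "'g letter \<Rightarrow> nat" where
  "idx (X i g) = i" | "idx (Xs i g) = i"

fun letter_star :: "'g letter \<Rightarrow> 'g letter" where
  "letter_star (X i g) = Xs i g" | "letter_star (Xs i g) = X i g"

fun ldeg :: "'g letter \<Rightarrow> 'g::group_add" where
  "ldeg (X i g) = g" | "ldeg (Xs i g) = - g"

definition wdeg :: "'g letter list \<Rightarrow> 'g::group_add" where
  "wdeg w = sum_list (map ldeg w)"

type_synonym 'g fa = "'g letter list \<Rightarrow> rat"

definition supp :: "'g fa \<Rightarrow> 'g letter list set" where
  "supp p = {w. p w \<noteq> 0}"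

definition FA :: "'g fa set" where
  "FA = {p. finite (supp p) \<and> (\<forall>w\<in>supp p. \<forall>l\<in>set w. 1 \<le> idx l)}"

definition fa_zero :: "'g fa" where "fa_zero = (\<lambda>w. 0)"
definition fa_one :: "'g fa" where "fa_one = (\<lambda>w. if w = [] then 1 else 0)"
definition fa_var :: "'g letter \<Rightarrow> 'g fa" where
  "fa_var l = (\<lambda>w. if w = [l] then 1 else 0)"
definition fa_add :: "'g fa \<Rightarrow> 'g fa \<Rightarrow> 'g fa" where
  "fa_add p q = (\<lambda>w. p w + q w)"
definition fa_diff :: "'g fa \<Rightarrow> 'g fa \<Rightarrow> 'g fa" where
  "fa_diff p q = (\<lambda>w. p w - q w)"
definition fa_smult :: "rat \<Rightarrow> 'g fa \<Rightarrow> 'g fa" where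
  "fa_smult c p = (\<lambda>w. c * p w)"
definition fa_mult :: "'g fa \<Rightarrow> 'g fa \<Rightarrow> 'g fa" where
  "fa_mult p q = (\<lambda>w. \<Sum>i\<in>{0..length w}. p (take i w) * q (drop i w))"

text \<open>The involution: the anti-automorphism exchanging x_{i,g} and x*_{i,g}.\<close>
definition fa_star :: "'g fa \<Rightarrow> 'g fa" where
  "fa_star p = (\<lambda>w. p (rev (map letter_star w)))"

definition homogeneous :: "'g::group_add \<Rightarrow> 'g fa \<Rightarrow> bool" where
  "homogeneous g p \<longleftrightarrow> (\<forall>w\<in>supp p. wdeg w = g)"

text \<open>The algebra endomorphism with x_{i,g} \<mapsto> h i g and x*_{i,g} \<mapsto> (h i g)*.\<close>
fun limg :: "(nat \<Rightarrow> 'g \<Rightarrow> 'g fa) \<Rightarrow> 'g letter \<Rightarrow> 'g fa" where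
  "limg h (X i g) = h i g" | "limg h (Xs i g) = fa_star (h i g)"

definition wimg :: "(nat \<Rightarrow> 'g \<Rightarrow> 'g fa) \<Rightarrow> 'g letter list \<Rightarrow> 'g fa" where
  "wimg h w = foldr fa_mult (map (limg h) w) fa_one"

definition subst :: "(nat \<Rightarrow> 'g \<Rightarrow> 'g fa) \<Rightarrow> 'g fa \<Rightarrow> 'g fa" where
  "subst h p = (\<lambda>u. \<Sum>w\<in>supp p. p w * wimg h w u)"

definition tstar_ideal :: "('g::group_add) fa set \<Rightarrow> bool" where
  "tstar_ideal J \<longleftrightarrow>
     J \<subseteq> FA \<and> fa_zero \<in> J \<and>
     (\<forall>a\<in>J. \<forall>b\<in>J. fa_add a b \<in> J) \<and>
     (\<forall>a\<in>J. \<forall>c. fa_smult c a \<in> J) \<and>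
     (\<forall>a\<in>J. \<forall>p\<in>FA. fa_mult p a \<in> J \<and> fa_mult a p \<in> J) \<and>
     (\<forall>a\<in>J. fa_star a \<in> J) \<and>
     (\<forall>h. (\<forall>i g. 1 \<le> i \<longrightarrow> h i g \<in> FA \<and> homogeneous g (h i g)) \<longrightarrow>
          (\<forall>a\<in>J. subst h a \<in> J))"

definition tstar_gen :: "('g::group_add) fa set \<Rightarrow> 'g fa set" where
  "tstar_gen S = \<Inter>{J. tstar_ideal J \<and> S \<subseteq> J}"

section \<open>M_k(C) indexed by G, with the crossed-product grading\<close>

type_synonym 'g cmat = "'g \<Rightarrow> 'g \<Rightarrow> complex"

definition mmult :: "('g::finite) cmat \<Rightarrow> 'g cmat \<Rightarrow> 'g cmat" where
  "mmult A B = (\<lambda>a c. \<Sum>b\<in>UNIV. A a b * B b c)"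
definition mone :: "'g cmat" where "mone = (\<lambda>a c. if a = c then 1 else 0)"
definition mzero :: "'g cmat" where "mzero = (\<lambda>a c. 0)"
definition mtrans :: "'g cmat \<Rightarrow> 'g cmat" where "mtrans A = (\<lambda>a c. A c a)"
definition mdiag :: "('g \<Rightarrow> complex) \<Rightarrow> 'g cmat" where
  "mdiag d = (\<lambda>a c. if a = c then d a else 0)"

text \<open>P_g = sum_h E_{h,hg}.\<close>
definition Pmat :: "'g::group_add \<Rightarrow> 'g cmat" where
  "Pmat g = (\<lambda>a c. if c = a + g then 1 else 0)"

definition graded_comp :: "'g::{group_add,finite} \<Rightarrow> 'g cmat set" where
  "graded_comp g = {mmult (mdiag d) (Pmat g) | d. True}"

fun meval :: "(nat \<Rightarrow> 'g \<Rightarrow> 'g cmat) \<Rightarrow> 'g letter \<Rightarrow> 'g cmat" where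
  "meval A (X i g) = A i g" | "meval A (Xs i g) = mtrans (A i g)"

definition weval :: "(nat \<Rightarrow> 'g \<Rightarrow> ('g::finite) cmat) \<Rightarrow> 'g letter list \<Rightarrow> 'g cmat" where
  "weval A w = foldr mmult (map (meval A) w) mone"

definition feval :: "(nat \<Rightarrow> 'g \<Rightarrow> ('g::finite) cmat) \<Rightarrow> 'g fa \<Rightarrow> 'g cmat" where
  "feval A p = (\<lambda>a c. \<Sum>w\<in>supp p. of_rat (p w) * weval A w a c)"

definition star_identities :: "('g::{group_add,finite}) fa set" where
  "star_identities = {f \<in> FA. \<forall>A. (\<forall>i g. A i g \<in> graded_comp g) \<longrightarrow> feval A f = mzero}"

definition star_gens :: "('g::group_add) fa set" where
  "star_gens =
     {fa_diff (fa_mult (fa_var (X i 0)) (fa_var (X j 0))) (fa_mult (fa_var (X j 0)) (fa_var (X i 0)))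
       | i j. 1 \<le> i \<and> 1 \<le> j}
   \<union> {fa_diff (fa_var (X i 0)) (fa_var (Xs i 0)) | i. 1 \<le> i}"

end

theory Submission
  imports Defs "HOL-Computational_Algebra.Primes" "HOL-Computational_Algebra.Polynomial"
    "HOL-Library.Countable_Set"
begin

text \<open>A word in the letters \<open>x\<^sub>i\<^sub>,\<^sub>h\<close>, \<open>x*\<^sub>i\<^sub>,\<^sub>h\<close> read from a vertex of \<open>G\<close> is a walk in
  the multigraph on \<open>G\<close> with an edge \<open>(i, h, t)\<close> from \<open>t\<close> to \<open>t + h\<close>: \<open>x\<^sub>i\<^sub>,\<^sub>h\<close> crosses an
  edge forwards, \<open>x*\<^sub>i\<^sub>,\<^sub>h\<close> backwards. Substituting for \<open>x\<^sub>i\<^sub>,\<^sub>h\<close> a generic element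
  \<open>diag(d) P\<^sub>h\<close> of degree \<open>h\<close>, the \<open>(e, g)\<close> entry of a monomial of degree \<open>g\<close> is the product
  of the weights of the edges of its walk from \<open>e\<close>. Taking as weights \<open>t\<close>-th powers of
  distinct primes and letting \<open>t\<close> vary, a graded \<open>*\<close>-identity must have zero coefficient sum
  on every class of monomials with the same degree and the same multiset of edges.

  Conversely, two monomials with the same degree and the same edges are congruent modulo the
  \<open>(T,*)\<close>-ideal generated by (1) and (2): these generators make words of degree \<open>e\<close>, i.e.\ closed
  walks, commute with each other and equal to their reversals, and these two moves suffice to
  bring the first letter of one walk to the front of the other, so induction on the length
  concludes.\<close>

section \<open>Words and their walks in the Cayley multigraph of G\<close>

definition word_star :: "'g letter list \<Rightarrow> 'g letter list" where
  "word_star w = rev (map letter_star w)"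

text \<open>Words in the generators of \<open>F\<close>; the letter type also has variables of index \<open>0\<close>.\<close>

definition admissible :: "'g letter list \<Rightarrow> bool" where
  "admissible w \<longleftrightarrow> (\<forall>l\<in>set w. 1 \<le> idx l)"

lemma wdeg_Nil [simp]: "wdeg [] = 0"
  by (simp add: wdeg_def)

lemma wdeg_Cons [simp]: "wdeg (l # w) = ldeg l + wdeg w"
  by (simp add: wdeg_def)

lemma wdeg_append [simp]: "wdeg (x @ y) = wdeg x + wdeg y"
  by (induction x) (auto simp: add.assoc)

lemma letter_star_letter_star [simp]: "letter_star (letter_star l) = l"
  by (cases l) auto

lemma ldeg_letter_star [simp]: "ldeg (letter_star l) = - ldeg l"
  by (cases l) auto

lemma idx_letter_star [simp]: "idx (letter_star l) = idx l"
  by (cases l) auto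

lemma word_star_Nil [simp]: "word_star [] = []"
  by (simp add: word_star_def)

lemma word_star_Cons [simp]: "word_star (l # w) = word_star w @ [letter_star l]"
  by (simp add: word_star_def)

lemma word_star_append [simp]: "word_star (x @ y) = word_star y @ word_star x"
  by (simp add: word_star_def)

lemma word_star_word_star [simp]: "word_star (word_star w) = w"
  by (simp add: word_star_def rev_map comp_def)

lemma wdeg_word_star [simp]: "wdeg (word_star w) = - wdeg w"
  by (induction w) (auto simp: minus_add)

lemma admissible_Nil [simp]: "admissible []"
  by (simp add: admissible_def)

lemma admissible_Cons [simp]: "admissible (l # w) \<longleftrightarrow> 1 \<le> idx l \<and> admissible w"
  by (simp add: admissible_def)

lemma admissible_append [simp]: "admissible (x @ y) \<longleftrightarrow> admissible x \<and> admissible y"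
  by (auto simp: admissible_def)

lemma admissible_word_star [simp]: "admissible (word_star w) \<longleftrightarrow> admissible w"
  by (auto simp: admissible_def word_star_def)

text \<open>The edge \<open>(i, h, t)\<close> joins \<open>t\<close> to \<open>t + h\<close>. Read at vertex \<open>s\<close>, the letter
  \<open>x\<^sub>i\<^sub>,\<^sub>h\<close> traverses the edge \<open>(i, h, s)\<close> forwards and \<open>x*\<^sub>i\<^sub>,\<^sub>h\<close> the edge
  \<open>(i, h, s - h)\<close> backwards; a word read from \<open>s\<close> is a walk ending at \<open>s + wdeg w\<close>.\<close>

fun letter_edge :: "'g::group_add \<Rightarrow> 'g letter \<Rightarrow> nat \<times> 'g \<times> 'g" where
  "letter_edge s (X i h) = (i, h, s)"
| "letter_edge s (Xs i h) = (i, h, s - h)"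

fun walk_edges :: "'g::group_add \<Rightarrow> 'g letter list \<Rightarrow> (nat \<times> 'g \<times> 'g) multiset" where
  "walk_edges s [] = {#}"
| "walk_edges s (l # w) = add_mset (letter_edge s l) (walk_edges (s + ldeg l) w)"

fun walk_vertices :: "'g::group_add \<Rightarrow> 'g letter list \<Rightarrow> 'g set" where
  "walk_vertices s [] = {s}"
| "walk_vertices s (l # w) = insert s (walk_vertices (s + ldeg l) w)"

lemma walk_edges_append:
  "walk_edges s (x @ y) = walk_edges s x + walk_edges (s + wdeg x) y"
  by (induction x arbitrary: s) (auto simp: add.assoc)

lemma letter_edge_letter_star: "letter_edge (s + ldeg l) (letter_star l) = letter_edge s l"
  by (cases l) (auto simp: add.assoc)

lemma walk_edges_word_star_shifted:
  "walk_edges (s + wdeg w) (word_star w) = walk_edges s w"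
proof (induction w arbitrary: s)
  case (Cons l w)
  have "walk_edges (s + wdeg (l # w)) (word_star (l # w))
      = walk_edges (s + ldeg l + wdeg w) (word_star w)
        + walk_edges (s + ldeg l + wdeg w + - wdeg w) [letter_star l]"
    by (simp add: walk_edges_append add.assoc)
  also have "\<dots> = walk_edges (s + ldeg l) w + {#letter_edge s l#}"
    using Cons.IH[of "s + ldeg l"] letter_edge_letter_star[of s l]
    by (simp add: add.assoc [symmetric])
  finally show ?case
    by simp
qed simp

lemma walk_edges_word_star:
  "wdeg w = 0 \<Longrightarrow> walk_edges s (word_star w) = walk_edges s w"
  using walk_edges_word_star_shifted[of s w] by simp

lemma size_walk_edges [simp]: "size (walk_edges s w) = length w"
  by (induction w arbitrary: s) auto

lemma walk_edges_eq_empty_iff [simp]: "walk_edges s w = {#} \<longleftrightarrow> w = []"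
  by (cases w) auto

lemma admissible_iff_walk_edges: "admissible w \<longleftrightarrow> (\<forall>e\<in>#walk_edges s w. 1 \<le> fst e)"
proof (induction w arbitrary: s)
  case (Cons l w)
  then show ?case
    by (cases l) auto
qed simp

lemma start_in_walk_vertices [simp]: "s \<in> walk_vertices s w"
  by (cases w) auto

lemma end_in_walk_vertices: "s + wdeg w \<in> walk_vertices s w"
proof (induction w arbitrary: s)
  case (Cons l w)
  then show ?case
    using Cons.IH[of "s + ldeg l"] by (simp add: add.assoc)
qed simp

lemma walk_vertices_iff: "a \<in> walk_vertices s w \<longleftrightarrow> (\<exists>x y. w = x @ y \<and> s + wdeg x = a)"
proof (induction w arbitrary: s)
  case (Cons l w)
  have "(\<exists>x y. l # w = x @ y \<and> s + wdeg x = a)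
      \<longleftrightarrow> a = s \<or> (\<exists>x y. w = x @ y \<and> s + ldeg l + wdeg x = a)"
    by (auto simp: Cons_eq_append_conv add.assoc) (metis append_Cons wdeg_Cons)
  then show ?case
    using Cons.IH by simp
qed auto

lemma letter_edge_endpoints:
  "letter_edge s l = (i, h, t) \<Longrightarrow> (s = t \<and> s + ldeg l = t + h) \<or> (s = t + h \<and> s + ldeg l = t)"
  by (cases l) (auto simp: add.assoc)

lemma walk_edges_endpoints:
  "(i, h, t) \<in># walk_edges s w \<Longrightarrow> t \<in> walk_vertices s w \<and> t + h \<in> walk_vertices s w"
proof (induction w arbitrary: s)
  case (Cons l w)
  show ?case
  proof (cases "letter_edge s l = (i, h, t)")
    case True
    then show ?thesis
      using letter_edge_endpoints[OF True] start_in_walk_vertices[of "s + ldeg l" w] by auto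
  next
    case False
    then show ?thesis
      using Cons by auto
  qed
qed simp

lemma letter_edge_eq:
  assumes "letter_edge s' l' = letter_edge s l"
  shows "(l' = l \<and> s' = s) \<or> (l' = letter_star l \<and> s' = s + ldeg l)"
  using assms by (cases l; cases l') (auto simp: diff_eq_eq)

lemma walk_edges_split:
  "e \<in># walk_edges s v \<Longrightarrow> \<exists>p l q. v = p @ l # q \<and> letter_edge (s + wdeg p) l = e"
proof (induction v arbitrary: s)
  case (Cons l v)
  show ?case
  proof (cases "letter_edge s l = e")
    case True
    then show ?thesis
      by (intro exI[of _ "[]"]) auto
  next
    case False
    then obtain p l' q where "v = p @ l' # q" "letter_edge (s + ldeg l + wdeg p) l' = e"
      using Cons by fastforce
    then show ?thesis
      by (intro exI[of _ "l # p"]) (auto simp: add.assoc)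
  qed
qed simp

lemma add_right_eq_self_iff [simp]: "(a::'a::group_add) + x = a \<longleftrightarrow> x = 0"
  by (metis add.right_neutral add_left_cancel)

lemma walk_confined:
  assumes E: "\<And>i h t. (i, h, t) \<in> E \<Longrightarrow> t \<in> S \<and> t + h \<in> S"
    and F: "\<And>i h t. (i, h, t) \<in> F \<Longrightarrow> t \<in> V \<and> t + h \<in> V"
    and SV: "S \<inter> V \<subseteq> {a}"
  shows "s \<in> S \<Longrightarrow> s \<noteq> a \<Longrightarrow> a \<notin> walk_vertices s w \<Longrightarrow> set_mset (walk_edges s w) \<subseteq> E \<union> F
     \<Longrightarrow> s + wdeg w \<in> S"
proof (induction w arbitrary: s)
  case (Cons l w)
  obtain i h t where e: "letter_edge s l = (i, h, t)"
    by (metis prod_cases3)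
  note ends = letter_edge_endpoints[OF e]
  have "(i, h, t) \<notin> F"
    using F ends SV Cons.prems(1,2) by auto
  then have "(i, h, t) \<in> E"
    using Cons.prems(4) e by auto
  then have "s + ldeg l \<in> S"
    using E ends by auto
  moreover have "s + ldeg l \<noteq> a"
    using Cons.prems(3) start_in_walk_vertices[of "s + ldeg l" w] by auto
  ultimately have "s + ldeg l + wdeg w \<in> S"
    using Cons.IH Cons.prems(3,4) by simp
  then show ?case
    by (simp add: add.assoc)
qed simp

text \<open>The only obstruction to bringing the first letter \<open>l\<close> of one walk to the front
  of another walk with the same edges: \<open>l\<close> is preceded by a closed walk \<open>p\<close> meeting
  the rest of the walk only at the start \<open>a\<close>, and the walk never returns to \<open>a\<close> after \<open>l\<close>.\<close>

definition blocked :: "'g::group_add \<Rightarrow> 'g letter \<Rightarrow> 'g letter list \<Rightarrow> bool" where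
  "blocked a l v \<longleftrightarrow> (\<exists>p q. v = p @ l # q \<and> p \<noteq> [] \<and> wdeg p = 0
     \<and> a \<notin> walk_vertices (a + ldeg l) q \<and> walk_vertices a p \<inter> walk_vertices a (l # q) \<subseteq> {a})"

lemma blocked_walks_incompatible:
  assumes "blocked a l v" and "v = m # r" and "blocked a m u"
    and edges: "walk_edges a u = walk_edges a v" and deg: "wdeg u = wdeg v"
  shows False
proof -
  obtain p q where v: "v = p @ l # q" and "p \<noteq> []" and wp: "wdeg p = 0"
    and disj: "walk_vertices a p \<inter> walk_vertices a (l # q) \<subseteq> {a}"
    using assms(1) by (auto simp: blocked_def)
  then obtain p' where p: "p = m # p'"
    using assms(2) by (cases p) auto
  obtain p2 q2 where u: "u = p2 @ m # q2" and wp2: "wdeg p2 = 0"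
    and avoid: "a \<notin> walk_vertices (a + ldeg m) q2"
    using assms(3) by (auto simp: blocked_def)
  define c where "c = a + ldeg m"
  have c_in: "c \<in> walk_vertices a p"
    using p by (simp add: c_def)
  have c_ne: "c \<noteq> a"
    using avoid start_in_walk_vertices[of c q2] by (auto simp: c_def)
  have "set_mset (walk_edges c q2) \<subseteq> set_mset (walk_edges a u)"
    using u wp2 by (auto simp: walk_edges_append c_def)
  also have "\<dots> = set_mset (walk_edges a p) \<union> set_mset (walk_edges a (l # q))"
    using edges v wp by (simp add: walk_edges_append)
  finally have "c + wdeg q2 \<in> walk_vertices a p"
    using walk_confined[of "set_mset (walk_edges a p)" "walk_vertices a p"
        "set_mset (walk_edges a (l # q))" "walk_vertices a (l # q)" a,
        OF walk_edges_endpoints walk_edges_endpoints disj c_in c_ne] avoid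
    by (simp add: c_def)
  moreover have "c + wdeg q2 = a + wdeg (l # q)"
    using u v wp wp2 deg by (simp add: c_def add.assoc)
  ultimately have "c + wdeg q2 = a"
    using disj end_in_walk_vertices[of a "l # q"] by auto
  then show False
    using end_in_walk_vertices[of c q2] avoid by (simp add: c_def)
qed

locale walk_congruence =
  fixes rel :: "'g::group_add letter list \<Rightarrow> 'g letter list \<Rightarrow> bool"
  assumes refl: "admissible u \<Longrightarrow> rel u u"
    and sym: "rel u v \<Longrightarrow> rel v u"
    and trans: "rel u v \<Longrightarrow> rel v w \<Longrightarrow> rel u w"
    and cong: "rel u v \<Longrightarrow> admissible x \<Longrightarrow> admissible y \<Longrightarrow> rel (x @ u @ y) (x @ v @ y)"
    and closed_walks_commute: "admissible b \<Longrightarrow> admissible c \<Longrightarrow> wdeg b = 0 \<Longrightarrow> wdeg c = 0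
      \<Longrightarrow> rel (b @ c) (c @ b)"
    and closed_walk_star: "admissible b \<Longrightarrow> wdeg b = 0 \<Longrightarrow> rel b (word_star b)"
begin

definition walk_equiv :: "'g \<Rightarrow> 'g letter list \<Rightarrow> 'g letter list \<Rightarrow> bool" where
  "walk_equiv a u v \<longleftrightarrow> rel u v \<and> walk_edges a u = walk_edges a v \<and> wdeg u = wdeg v"

lemma walk_equiv_trans: "walk_equiv a u v \<Longrightarrow> walk_equiv a v w \<Longrightarrow> walk_equiv a u w"
  by (auto simp: walk_equiv_def intro: trans)

lemma walk_equiv_star_in_context:
  assumes "admissible x" "admissible b" "admissible y" "wdeg b = 0"
  shows "walk_equiv a (x @ b @ y) (x @ word_star b @ y)"
  using cong[OF closed_walk_star[OF assms(2,4)] assms(1,3)] walk_edges_word_star[OF assms(4)]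
    assms(4)
  by (simp add: walk_equiv_def walk_edges_append)

lemma walk_equiv_commute_in_context:
  assumes "admissible x" "admissible b" "admissible c" "admissible y" "wdeg b = 0" "wdeg c = 0"
  shows "walk_equiv a (x @ b @ c @ y) (x @ c @ b @ y)"
  using cong[OF closed_walks_commute[OF assms(2,3,5,6)] assms(1,4)] assms(5,6)
  by (simp add: walk_equiv_def walk_edges_append add_ac)

lemma leads_if_traversed_backwards:
  assumes "admissible p" "1 \<le> idx l" "admissible q" "wdeg p = ldeg l"
  shows "walk_equiv a (p @ letter_star l # q) (l # word_star p @ q)"
  using walk_equiv_star_in_context[of "[]" "p @ [letter_star l]" q a] assms by simp

lemma leads_if_walk_returns:
  assumes "admissible p" "admissible (l # q1)" "admissible q2" "wdeg p = 0" "wdeg (l # q1) = 0"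
  shows "walk_equiv a (p @ l # q1 @ q2) (l # q1 @ p @ q2)"
  using walk_equiv_commute_in_context[OF _ assms, of "[]" a] by simp

text \<open>If the loop \<open>p\<close> and the rest \<open>l # q\<close> share a vertex \<open>y \<noteq> a\<close>, reversing the
  closed walk from \<open>y\<close> around \<open>p\<close> and back along \<open>l # q\<close>, and then the closed walk
  through \<open>a\<close>, brings \<open>l\<close> to the front.\<close>

lemma leads_if_loop_meets_rest:
  assumes adm: "admissible p" "1 \<le> idx l" "admissible q" and wp: "wdeg p = 0"
    and y: "y \<in> walk_vertices a p" "y \<in> walk_vertices a (l # q)" "y \<noteq> a"
  shows "\<exists>v'. walk_equiv a (p @ l # q) (l # v')"
proof -
  obtain p1 p2 where p: "p = p1 @ p2" and ap1: "a + wdeg p1 = y"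
    using y(1) walk_vertices_iff by blast
  obtain r1 r2 where r: "l # q = r1 @ r2" and ar1: "a + wdeg r1 = y"
    using y(2) walk_vertices_iff by blast
  have "r1 \<noteq> []"
    using ar1 y(3) by auto
  then obtain r1' where r1: "r1 = l # r1'"
    using r by (cases r1) auto
  have w1: "wdeg p1 = wdeg r1"
    using ap1 ar1 add_left_cancel by metis
  have "wdeg p1 + wdeg p2 = 0"
    using wp p by simp
  then have "wdeg p2 = - wdeg r1"
    using w1 minus_unique[symmetric] by metis
  then have w2: "wdeg (p2 @ r1) = 0"
    by simp
  have "admissible (r1 @ r2)"
    using adm(2,3) r[symmetric] by simp
  then have adm': "admissible p1" "admissible p2" "admissible r1" "admissible r2"
    using adm(1) p by auto
  have "walk_equiv a (p1 @ (p2 @ r1) @ r2) (p1 @ word_star (p2 @ r1) @ r2)"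
    using walk_equiv_star_in_context[OF _ _ _ w2] adm' by simp
  moreover have "walk_equiv a ([] @ (p1 @ word_star r1) @ word_star p2 @ r2)
      ([] @ word_star (p1 @ word_star r1) @ word_star p2 @ r2)"
    using walk_equiv_star_in_context[of "[]" "p1 @ word_star r1" "word_star p2 @ r2"] w1 adm'
    by simp
  ultimately have "walk_equiv a (p @ l # q) (l # r1' @ word_star p1 @ word_star p2 @ r2)"
    using p r r1 walk_equiv_trans by simp
  then show ?thesis ..
qed

lemma leads_or_blocked:
  assumes adm: "admissible v" and e: "letter_edge a l \<in># walk_edges a v"
  shows "(\<exists>v'. walk_equiv a v (l # v')) \<or> blocked a l v"
proof -
  obtain p l' q where v: "v = p @ l' # q" and e': "letter_edge (a + wdeg p) l' = letter_edge a l"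
    using walk_edges_split[OF e] by blast
  have adm': "admissible p" "1 \<le> idx l'" "admissible q"
    using adm v by auto
  consider (backwards) "l' = letter_star l" "wdeg p = ldeg l" | (forwards) "l' = l" "wdeg p = 0"
    using letter_edge_eq[OF e'] by auto
  then show ?thesis
  proof cases
    case backwards
    then show ?thesis
      using leads_if_traversed_backwards[of p l q a] adm' v by auto
  next
    case forwards
    consider (nil) "p = []" | (returns) "a \<in> walk_vertices (a + ldeg l) q"
      | (meets) y where "y \<in> walk_vertices a p" "y \<in> walk_vertices a (l # q)" "y \<noteq> a"
      | (stuck) "blocked a l v"
      using v forwards by (auto simp: blocked_def)
    then show ?thesis
    proof cases
      case nil
      then show ?thesis
        using v forwards refl[OF adm] by (auto simp: walk_equiv_def)
    next
      case returns
      then obtain q1 q2 where "q = q1 @ q2" "a + ldeg l + wdeg q1 = a"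
        using walk_vertices_iff by blast
      then show ?thesis
        using leads_if_walk_returns[of p l q1 q2 a] adm' v forwards by (auto simp: add.assoc)
    next
      case meets
      then show ?thesis
        using leads_if_loop_meets_rest[OF _ _ _ _ meets] adm' v forwards by auto
    qed simp
  qed
qed

theorem rel_if_same_walk:
  assumes "admissible u" "admissible v" "walk_edges a u = walk_edges a v" "wdeg u = wdeg v"
  shows "rel u v"
  using assms
proof (induction "length u" arbitrary: a u v rule: less_induct)
  case less
  have len: "length v = length u"
    using size_walk_edges less.prems(3) by metis
  have step: "rel x (k # y)"
    if eq: "walk_equiv a x (k # x')" and edges: "walk_edges a x = walk_edges a (k # y)"
      and deg: "wdeg x = wdeg (k # y)" and "length x = length u"
      and adm: "admissible x" "admissible (k # y)"
    for x x' k y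
  proof -
    have edges': "walk_edges a (k # x') = walk_edges a (k # y)" and "wdeg (k # x') = wdeg (k # y)"
      using eq edges deg by (auto simp: walk_equiv_def)
    then have "walk_edges (a + ldeg k) x' = walk_edges (a + ldeg k) y" and "wdeg x' = wdeg y"
      by auto
    moreover have "admissible (k # x')"
      using adm(2) edges' admissible_iff_walk_edges by metis
    moreover have "length x' < length u"
      using eq \<open>length x = length u\<close> size_walk_edges by (metis walk_equiv_def length_Cons lessI)
    ultimately have "rel x' y"
      using less.hyps adm(2) by auto
    then have "rel ([k] @ x' @ []) ([k] @ y @ [])"
      using cong adm(2) by (metis admissible_Cons admissible_Nil)
    then show ?thesis
      using eq trans by (auto simp: walk_equiv_def)
  qed
  show ?case
  proof (cases u)
    case Nil
    then show ?thesis
      using less.prems refl by auto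
  next
    case (Cons l u')
    then have "letter_edge a l \<in># walk_edges a v"
      using less.prems(3) by (metis walk_edges.simps(2) union_single_eq_member)
    from leads_or_blocked[OF less.prems(2) this] show ?thesis
    proof
      assume "\<exists>v'. walk_equiv a v (l # v')"
      then obtain v' where "walk_equiv a v (l # v')" ..
      then have "rel v u"
        using step less.prems len Cons by simp
      then show ?thesis
        by (rule sym)
    next
      assume "blocked a l v"
      then obtain m r where v: "v = m # r"
        by (auto simp: blocked_def neq_Nil_conv)
      then have "letter_edge a m \<in># walk_edges a u"
        using less.prems(3) by simp
      from leads_or_blocked[OF less.prems(1) this] show ?thesis
      proof
        assume "\<exists>u'. walk_equiv a u (m # u')"
        then obtain u'' where "walk_equiv a u (m # u'')" ..
        then show ?thesis
          using step less.prems v by simp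
      next
        assume "blocked a m u"
        then show ?thesis
          using blocked_walks_incompatible \<open>blocked a l v\<close> v less.prems(3,4) by blast
      qed
    qed
  qed
qed

end

definition fa_mon :: "'g letter list \<Rightarrow> 'g fa" where
  "fa_mon w = (\<lambda>x. if x = w then 1 else 0)"

lemma supp_fa_mon [simp]: "supp (fa_mon w) = {w}"
  by (auto simp: supp_def fa_mon_def)

lemma fa_one_eq_fa_mon: "fa_one = fa_mon []"
  by (simp add: fa_one_def fa_mon_def fun_eq_iff)

lemma fa_var_eq_fa_mon: "fa_var l = fa_mon [l]"
  by (simp add: fa_var_def fa_mon_def fun_eq_iff)

lemma fa_mult_fa_mon: "fa_mult (fa_mon u) (fa_mon v) = fa_mon (u @ v)"
proof
  fix x
  have "take i x = u \<and> drop i x = v \<longleftrightarrow> i = length u \<and> x = u @ v" if "i \<le> length x" for i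
    using that append_take_drop_id[of i x] by auto
  then have "fa_mult (fa_mon u) (fa_mon v) x
      = (\<Sum>i\<in>{0..length x}. if i = length u \<and> x = u @ v then 1 else 0)"
    unfolding fa_mult_def fa_mon_def by (intro sum.cong) auto
  also have "\<dots> = fa_mon (u @ v) x"
    by (cases "x = u @ v") (auto simp: fa_mon_def)
  finally show "fa_mult (fa_mon u) (fa_mon v) x = fa_mon (u @ v) x" .
qed

lemma fa_expand: "finite U \<Longrightarrow> supp p \<subseteq> U \<Longrightarrow> p = (\<lambda>x. \<Sum>u\<in>U. p u * fa_mon u x)"
proof
  fix x assume U: "finite U" "supp p \<subseteq> U"
  have "(\<Sum>u\<in>U. p u * fa_mon u x) = (\<Sum>u\<in>U. if u = x then p x else 0)"
    by (rule sum.cong) (auto simp: fa_mon_def)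
  also have "\<dots> = p x"
    using U by (auto simp: supp_def)
  finally show "p x = (\<Sum>u\<in>U. p u * fa_mon u x)"
    by simp
qed

lemma fa_mult_sum_left: "fa_mult (\<lambda>x. \<Sum>j\<in>K. c j * f j x) q = (\<lambda>x. \<Sum>j\<in>K. c j * fa_mult (f j) q x)"
proof
  fix x
  have "fa_mult (\<lambda>x. \<Sum>j\<in>K. c j * f j x) q x
      = (\<Sum>i\<in>{0..length x}. \<Sum>j\<in>K. c j * (f j (take i x) * q (drop i x)))"
    unfolding fa_mult_def by (simp add: sum_distrib_right mult.assoc)
  also have "\<dots> = (\<Sum>j\<in>K. \<Sum>i\<in>{0..length x}. c j * (f j (take i x) * q (drop i x)))"
    by (rule sum.swap)
  also have "\<dots> = (\<Sum>j\<in>K. c j * fa_mult (f j) q x)"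
    unfolding fa_mult_def by (simp add: sum_distrib_left)
  finally show "fa_mult (\<lambda>x. \<Sum>j\<in>K. c j * f j x) q x = (\<Sum>j\<in>K. c j * fa_mult (f j) q x)" .
qed

lemma fa_mult_sum_right: "fa_mult p (\<lambda>x. \<Sum>j\<in>K. c j * f j x) = (\<lambda>x. \<Sum>j\<in>K. c j * fa_mult p (f j) x)"
proof
  fix x
  have "fa_mult p (\<lambda>x. \<Sum>j\<in>K. c j * f j x) x
      = (\<Sum>i\<in>{0..length x}. \<Sum>j\<in>K. c j * (p (take i x) * f j (drop i x)))"
    unfolding fa_mult_def by (simp add: sum_distrib_left mult_ac)
  also have "\<dots> = (\<Sum>j\<in>K. \<Sum>i\<in>{0..length x}. c j * (p (take i x) * f j (drop i x)))"
    by (rule sum.swap)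
  also have "\<dots> = (\<Sum>j\<in>K. c j * fa_mult p (f j) x)"
    unfolding fa_mult_def by (simp add: sum_distrib_left)
  finally show "fa_mult p (\<lambda>x. \<Sum>j\<in>K. c j * f j x) x = (\<Sum>j\<in>K. c j * fa_mult p (f j) x)" .
qed

lemma fa_mult_expand:
  assumes "finite U" "supp p \<subseteq> U" "finite V" "supp q \<subseteq> V"
  shows "fa_mult p q = (\<lambda>x. \<Sum>u\<in>U. \<Sum>v\<in>V. p u * q v * fa_mon (u @ v) x)"
proof -
  have "fa_mult p q = fa_mult (\<lambda>x. \<Sum>u\<in>U. p u * fa_mon u x) (\<lambda>x. \<Sum>v\<in>V. q v * fa_mon v x)"
    using fa_expand[OF assms(1,2)] fa_expand[OF assms(3,4)] by metis
  also have "\<dots> = (\<lambda>x. \<Sum>u\<in>U. p u * (\<Sum>v\<in>V. q v * fa_mult (fa_mon u) (fa_mon v) x))"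
    by (simp add: fa_mult_sum_left fa_mult_sum_right)
  also have "\<dots> = (\<lambda>x. \<Sum>u\<in>U. \<Sum>v\<in>V. p u * q v * fa_mon (u @ v) x)"
    by (simp add: fa_mult_fa_mon sum_distrib_left mult_ac)
  finally show ?thesis .
qed

lemma fa_mult_diff_left: "fa_mult (fa_diff p q) r = fa_diff (fa_mult p r) (fa_mult q r)"
  by (simp add: fa_mult_def fa_diff_def fun_eq_iff sum_subtractf left_diff_distrib)

lemma fa_mult_diff_right: "fa_mult r (fa_diff p q) = fa_diff (fa_mult r p) (fa_mult r q)"
  by (simp add: fa_mult_def fa_diff_def fun_eq_iff sum_subtractf right_diff_distrib)

lemma fa_diff_eq_add_smult: "fa_diff p q = fa_add p (fa_smult (-1) q)"
  by (simp add: fa_diff_def fa_add_def fa_smult_def fun_eq_iff)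

lemma supp_fa_add: "supp (fa_add p q) \<subseteq> supp p \<union> supp q"
  by (auto simp: supp_def fa_add_def)

lemma supp_fa_diff: "supp (fa_diff p q) \<subseteq> supp p \<union> supp q"
  by (auto simp: supp_def fa_diff_def)

lemma supp_fa_smult: "supp (fa_smult c p) \<subseteq> supp p"
  by (auto simp: supp_def fa_smult_def)

lemma supp_fa_zero [simp]: "supp fa_zero = {}"
  by (auto simp: supp_def fa_zero_def)

lemma fa_star_apply: "fa_star p w = p (word_star w)"
  by (simp add: fa_star_def word_star_def)

lemma fa_star_fa_mon: "fa_star (fa_mon w) = fa_mon (word_star w)"
  unfolding fun_eq_iff fa_star_apply fa_mon_def by (metis word_star_word_star)

lemma supp_fa_star: "supp (fa_star p) = word_star ` supp p"
  by (auto simp: supp_def fa_star_apply image_iff) (metis word_star_word_star)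

lemma supp_sum: "supp (\<lambda>x. \<Sum>j\<in>K. f j x) \<subseteq> (\<Union>j\<in>K. supp (f j))"
  by (auto simp: supp_def) (meson sum.neutral)

lemma supp_fa_mult: "supp (fa_mult p q) \<subseteq> (\<lambda>(u, v). u @ v) ` (supp p \<times> supp q)"
proof
  fix x assume "x \<in> supp (fa_mult p q)"
  then have "(\<Sum>i\<in>{0..length x}. p (take i x) * q (drop i x)) \<noteq> 0"
    by (simp add: supp_def fa_mult_def)
  then obtain i where "p (take i x) * q (drop i x) \<noteq> 0"
    by (meson sum.neutral)
  then show "x \<in> (\<lambda>(u, v). u @ v) ` (supp p \<times> supp q)"
    by (intro rev_image_eqI[of "(take i x, drop i x)"]) (auto simp: supp_def)
qed

lemma FA_iff: "p \<in> FA \<longleftrightarrow> finite (supp p) \<and> (\<forall>w\<in>supp p. admissible w)"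
  by (auto simp: FA_def admissible_def)

lemma FA_subset: "finite U \<Longrightarrow> \<forall>w\<in>U. admissible w \<Longrightarrow> supp p \<subseteq> U \<Longrightarrow> p \<in> FA"
  by (auto simp: FA_iff intro: finite_subset)

lemma fa_mon_FA: "admissible w \<Longrightarrow> fa_mon w \<in> FA"
  by (simp add: FA_iff)

lemma FA_zero: "fa_zero \<in> FA"
  by (simp add: FA_iff)

lemma FA_one: "fa_one \<in> FA"
  by (simp add: fa_one_eq_fa_mon fa_mon_FA)

lemma FA_add: "p \<in> FA \<Longrightarrow> q \<in> FA \<Longrightarrow> fa_add p q \<in> FA"
  by (rule FA_subset[OF _ _ supp_fa_add]) (auto simp: FA_iff)

lemma FA_diff: "p \<in> FA \<Longrightarrow> q \<in> FA \<Longrightarrow> fa_diff p q \<in> FA"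
  by (rule FA_subset[OF _ _ supp_fa_diff]) (auto simp: FA_iff)

lemma FA_smult: "p \<in> FA \<Longrightarrow> fa_smult c p \<in> FA"
  by (rule FA_subset[OF _ _ supp_fa_smult]) (auto simp: FA_iff)

lemma FA_star: "p \<in> FA \<Longrightarrow> fa_star p \<in> FA"
  by (auto simp: FA_iff supp_fa_star)

lemma FA_mult: "p \<in> FA \<Longrightarrow> q \<in> FA \<Longrightarrow> fa_mult p q \<in> FA"
  by (rule FA_subset[OF _ _ supp_fa_mult]) (auto simp: FA_iff)

lemma FA_sum: "finite K \<Longrightarrow> (\<And>j. j \<in> K \<Longrightarrow> f j \<in> FA) \<Longrightarrow> (\<lambda>x. \<Sum>j\<in>K. f j x) \<in> FA"
  by (rule FA_subset[OF _ _ supp_sum]) (auto simp: FA_iff)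

lemma wimg_Nil [simp]: "wimg h [] = fa_one"
  by (simp add: wimg_def)

lemma wimg_Cons [simp]: "wimg h (l # w) = fa_mult (limg h l) (wimg h w)"
  by (simp add: wimg_def)

lemma wimg_FA:
  assumes "\<And>i g. 1 \<le> i \<Longrightarrow> h i g \<in> FA"
  shows "admissible w \<Longrightarrow> wimg h w \<in> FA"
proof (induction w)
  case (Cons l w)
  then have "limg h l \<in> FA"
    using assms by (cases l) (auto simp: FA_star)
  then show ?case
    using Cons by (simp add: FA_mult)
qed (simp add: FA_one)

lemma subst_FA:
  assumes "\<And>i g. 1 \<le> i \<Longrightarrow> h i g \<in> FA" and "p \<in> FA"
  shows "subst h p \<in> FA"
  unfolding subst_def
proof (rule FA_sum)
  fix w assume "w \<in> supp p"
  then have "admissible w"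
    using assms(2) by (simp add: FA_iff)
  then have "wimg h w \<in> FA"
    using wimg_FA assms(1) by blast
  then show "(\<lambda>x. p w * wimg h w x) \<in> FA"
    using FA_smult[of "wimg h w" "p w"] by (simp add: fa_smult_def)
qed (use assms in \<open>simp add: FA_iff\<close>)

lemma supp_fa_diff_fa_mon: "u \<noteq> v \<Longrightarrow> supp (fa_diff (fa_mon u) (fa_mon v)) = {u, v}"
  by (auto simp: supp_def fa_diff_def fa_mon_def)

lemma subst_fa_diff_fa_mon:
  "u \<noteq> v \<Longrightarrow> subst h (fa_diff (fa_mon u) (fa_mon v)) = fa_diff (wimg h u) (wimg h v)"
  unfolding subst_def
  by (simp add: supp_fa_diff_fa_mon) (simp add: fa_diff_def fa_mon_def fun_eq_iff)

lemma mmult_assoc: "mmult (mmult A B) C = mmult A (mmult B C)"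
proof (intro ext)
  fix a c
  have "mmult (mmult A B) C a c = (\<Sum>d\<in>UNIV. \<Sum>b\<in>UNIV. A a b * B b d * C d c)"
    by (simp add: mmult_def sum_distrib_right)
  also have "\<dots> = (\<Sum>b\<in>UNIV. \<Sum>d\<in>UNIV. A a b * B b d * C d c)"
    by (rule sum.swap)
  also have "\<dots> = mmult A (mmult B C) a c"
    by (simp add: mmult_def sum_distrib_left mult.assoc)
  finally show "mmult (mmult A B) C a c = mmult A (mmult B C) a c" .
qed

lemma mmult_mone_left [simp]: "mmult mone A = A"
proof (intro ext)
  fix x y
  have "mmult mone A x y = (\<Sum>b\<in>UNIV. if b = x then A b y else 0)"
    unfolding mmult_def mone_def by (rule sum.cong) auto
  then show "mmult mone A x y = A x y"
    by simp
qed

lemma mmult_mone_right [simp]: "mmult A mone = A"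
proof (intro ext)
  fix x y
  have "mmult A mone x y = (\<Sum>b\<in>UNIV. if b = y then A x b else 0)"
    unfolding mmult_def mone_def by (rule sum.cong) auto
  then show "mmult A mone x y = A x y"
    by simp
qed

lemma mmult_mzero_left [simp]: "mmult mzero A = mzero"
  by (simp add: mmult_def mzero_def fun_eq_iff)

lemma mmult_mzero_right [simp]: "mmult A mzero = mzero"
  by (simp add: mmult_def mzero_def fun_eq_iff)

lemma mtrans_mtrans [simp]: "mtrans (mtrans A) = A"
  by (simp add: mtrans_def)

lemma mtrans_mmult: "mtrans (mmult A B) = mmult (mtrans B) (mtrans A)"
  by (simp add: mtrans_def mmult_def fun_eq_iff mult.commute)

lemma mtrans_mone [simp]: "mtrans mone = mone"
  by (auto simp: mtrans_def mone_def fun_eq_iff)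

lemma mtrans_mzero [simp]: "mtrans mzero = mzero"
  by (auto simp: mtrans_def mzero_def fun_eq_iff)

lemma weval_Nil [simp]: "weval A [] = mone"
  by (simp add: weval_def)

lemma weval_Cons [simp]: "weval A (l # w) = mmult (meval A l) (weval A w)"
  by (simp add: weval_def)

lemma weval_append: "weval A (u @ v) = mmult (weval A u) (weval A v)"
  by (induction u) (auto simp: mmult_assoc)

lemma meval_letter_star: "meval A (letter_star l) = mtrans (meval A l)"
  by (cases l) auto

lemma weval_word_star: "weval A (word_star w) = mtrans (weval A w)"
  by (induction w) (auto simp: weval_append meval_letter_star mtrans_mmult)

lemma feval_eq_sum:
  "finite T \<Longrightarrow> supp p \<subseteq> T \<Longrightarrow> feval A p a c = (\<Sum>w\<in>T. of_rat (p w) * weval A w a c)"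
  unfolding feval_def by (rule sum.mono_neutral_left) (auto simp: supp_def)

lemma feval_fa_mon [simp]: "feval A (fa_mon w) = weval A w"
  unfolding feval_def supp_fa_mon by (simp add: fa_mon_def)

lemma feval_sum:
  assumes K: "finite K" and f: "\<And>j. j \<in> K \<Longrightarrow> finite (supp (f j))"
  shows "feval A (\<lambda>x. \<Sum>j\<in>K. c j * f j x) a b = (\<Sum>j\<in>K. of_rat (c j) * feval A (f j) a b)"
proof -
  define T where "T = (\<Union>j\<in>K. supp (f j))"
  have T: "finite T" and supp_T: "\<And>j. j \<in> K \<Longrightarrow> supp (f j) \<subseteq> T"
    using K f by (auto simp: T_def)
  have "supp (\<lambda>x. \<Sum>j\<in>K. c j * f j x) \<subseteq> T"
    using supp_sum[of "\<lambda>j x. c j * f j x" K] by (auto simp: T_def supp_def)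
  then have "feval A (\<lambda>x. \<Sum>j\<in>K. c j * f j x) a b
      = (\<Sum>w\<in>T. of_rat (\<Sum>j\<in>K. c j * f j w) * weval A w a b)"
    by (rule feval_eq_sum[OF T])
  also have "\<dots> = (\<Sum>j\<in>K. \<Sum>w\<in>T. of_rat (c j) * (of_rat (f j w) * weval A w a b))"
    by (subst sum.swap) (simp add: of_rat_sum of_rat_mult sum_distrib_right mult.assoc)
  also have "\<dots> = (\<Sum>j\<in>K. of_rat (c j) * feval A (f j) a b)"
    using feval_eq_sum[OF T supp_T] by (simp add: sum_distrib_left)
  finally show ?thesis .
qed

lemma feval_mult:
  assumes U: "finite (supp p)" and V: "finite (supp q)"
  shows "feval A (fa_mult p q) = mmult (feval A p) (feval A q)"
proof (intro ext)
  fix a c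
  let ?U = "supp p" and ?V = "supp q"
  have "fa_mult p q
      = (\<lambda>x. \<Sum>uv\<in>?U \<times> ?V. (p (fst uv) * q (snd uv)) * fa_mon (fst uv @ snd uv) x)"
    using fa_mult_expand[OF U subset_refl V subset_refl]
    by (simp add: sum.cartesian_product case_prod_beta)
  then have "feval A (fa_mult p q) a c
      = (\<Sum>uv\<in>?U \<times> ?V. of_rat (p (fst uv) * q (snd uv)) * weval A (fst uv @ snd uv) a c)"
    using U V by (simp add: feval_sum)
  also have "\<dots> = (\<Sum>u\<in>?U. \<Sum>v\<in>?V. of_rat (p u) * of_rat (q v) * weval A (u @ v) a c)"
    by (simp add: sum.cartesian_product of_rat_mult case_prod_beta)
  also have "\<dots> = (\<Sum>u\<in>?U. \<Sum>b\<in>UNIV. \<Sum>v\<in>?V.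
      of_rat (p u) * weval A u a b * (of_rat (q v) * weval A v b c))"
    by (simp add: weval_append mmult_def sum_distrib_left mult_ac sum.swap[of _ ?V])
  also have "\<dots> = (\<Sum>b\<in>UNIV. \<Sum>u\<in>?U. \<Sum>v\<in>?V.
      of_rat (p u) * weval A u a b * (of_rat (q v) * weval A v b c))"
    by (rule sum.swap)
  also have "\<dots> = mmult (feval A p) (feval A q) a c"
    by (simp add: mmult_def feval_def sum_product)
  finally show "feval A (fa_mult p q) a c = mmult (feval A p) (feval A q) a c" .
qed

lemma feval_star: "finite (supp p) \<Longrightarrow> feval A (fa_star p) = mtrans (feval A p)"
proof (intro ext)
  fix a c
  have "feval A (fa_star p) a c
      = (\<Sum>w\<in>word_star ` supp p. of_rat (p (word_star w)) * weval A w a c)"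
    by (simp add: feval_def supp_fa_star fa_star_apply)
  also have "\<dots> = (\<Sum>w\<in>supp p. of_rat (p w) * weval A (word_star w) a c)"
    by (subst sum.reindex) (auto simp: inj_on_def, metis word_star_word_star)
  also have "\<dots> = mtrans (feval A p) a c"
    by (simp add: weval_word_star mtrans_def feval_def)
  finally show "feval A (fa_star p) a c = mtrans (feval A p) a c" .
qed

lemma feval_add:
  assumes "finite (supp p)" "finite (supp q)"
  shows "feval A (fa_add p q) a c = feval A p a c + feval A q a c"
proof -
  let ?T = "supp p \<union> supp q"
  have "feval A (fa_add p q) a c = (\<Sum>w\<in>?T. of_rat (fa_add p q w) * weval A w a c)"
    using feval_eq_sum[of ?T "fa_add p q"] supp_fa_add[of p q] assms by blast
  also have "\<dots> = (\<Sum>w\<in>?T. of_rat (p w) * weval A w a c) + (\<Sum>w\<in>?T. of_rat (q w) * weval A w a c)"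
    by (simp add: fa_add_def of_rat_add distrib_right sum.distrib)
  also have "\<dots> = feval A p a c + feval A q a c"
    using feval_eq_sum[of ?T p] feval_eq_sum[of ?T q] assms by simp
  finally show ?thesis .
qed

lemma feval_smult: "feval A (fa_smult r p) a c = of_rat r * feval A p a c"
proof (cases "r = 0")
  case True
  then show ?thesis
    by (simp add: feval_def fa_smult_def supp_def)
next
  case False
  then have "supp (fa_smult r p) = supp p"
    by (auto simp: supp_def fa_smult_def)
  then show ?thesis
    by (simp add: feval_def fa_smult_def of_rat_mult sum_distrib_left mult.assoc)
qed

lemma feval_zero [simp]: "feval A fa_zero = mzero"
  by (simp add: feval_def mzero_def fun_eq_iff)

lemma feval_one [simp]: "feval A fa_one = mone"
  by (simp add: fa_one_eq_fa_mon)

lemma feval_diff: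
  "finite (supp p) \<Longrightarrow> finite (supp q) \<Longrightarrow> feval A (fa_diff p q) a c = feval A p a c - feval A q a c"
  unfolding fa_diff_eq_add_smult
  by (subst feval_add) (auto simp: feval_smult intro: finite_subset[OF supp_fa_smult])

text \<open>The entries of index \<open>0\<close>, which no admissible word uses, are left unchanged.\<close>

definition subst_eval :: "(nat \<Rightarrow> 'g \<Rightarrow> ('g::finite) cmat) \<Rightarrow> (nat \<Rightarrow> 'g \<Rightarrow> 'g fa)
    \<Rightarrow> nat \<Rightarrow> 'g \<Rightarrow> 'g cmat" where
  "subst_eval A h = (\<lambda>i g. if 1 \<le> i then feval A (h i g) else A i g)"

lemma feval_wimg:
  assumes h: "\<And>i g. 1 \<le> i \<Longrightarrow> h i g \<in> FA"
  shows "admissible w \<Longrightarrow> feval A (wimg h w) = weval (subst_eval A h) w"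
proof (induction w)
  case (Cons l w)
  have l: "1 \<le> idx l" and w: "admissible w"
    using Cons.prems by auto
  have "feval A (limg h l) = meval (subst_eval A h) l"
    using l h by (cases l) (auto simp: subst_eval_def feval_star FA_iff)
  moreover have "limg h l \<in> FA"
    using l h by (cases l) (auto simp: FA_star)
  moreover have "wimg h w \<in> FA"
    using wimg_FA[OF h w] .
  ultimately show ?case
    using Cons.IH[OF w] by (simp add: feval_mult FA_iff)
qed simp

lemma feval_subst:
  assumes h: "\<And>i g. 1 \<le> i \<Longrightarrow> h i g \<in> FA" and p: "p \<in> FA"
  shows "feval A (subst h p) = feval (subst_eval A h) p"
proof (intro ext)
  fix x y
  have adm: "admissible w" if "w \<in> supp p" for w
    using p that by (simp add: FA_iff)
  have "feval A (subst h p) x y = (\<Sum>w\<in>supp p. of_rat (p w) * feval A (wimg h w) x y)"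
    unfolding subst_def using p wimg_FA[OF h adm] by (intro feval_sum) (auto simp: FA_iff)
  also have "\<dots> = (\<Sum>w\<in>supp p. of_rat (p w) * weval (subst_eval A h) w x y)"
    by (intro sum.cong refl) (simp add: feval_wimg[OF h adm])
  also have "\<dots> = feval (subst_eval A h) p x y"
    by (simp add: feval_def)
  finally show "feval A (subst h p) x y = feval (subst_eval A h) p x y" .
qed

section \<open>The crossed-product grading\<close>

definition graded_mat :: "'g::group_add \<Rightarrow> 'g cmat \<Rightarrow> bool" where
  "graded_mat g M \<longleftrightarrow> (\<forall>a c. c \<noteq> a + g \<longrightarrow> M a c = 0)"

lemma mdiag_mmult_Pmat:
  "mmult (mdiag d) (Pmat g) = (\<lambda>a c. if c = a + g then d a else (0::complex))"
proof (intro ext)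
  fix a c
  have "mmult (mdiag d) (Pmat g) a c
      = (\<Sum>b\<in>UNIV. if b = a then (if c = a + g then d a else 0) else 0)"
    unfolding mmult_def mdiag_def Pmat_def by (rule sum.cong) auto
  then show "mmult (mdiag d) (Pmat g) a c = (if c = a + g then d a else 0)"
    by simp
qed

lemma graded_comp_iff: "M \<in> graded_comp g \<longleftrightarrow> graded_mat g M"
proof
  assume "M \<in> graded_comp g"
  then show "graded_mat g M"
    by (auto simp: graded_comp_def graded_mat_def mdiag_mmult_Pmat)
next
  assume "graded_mat g M"
  then have "M = mmult (mdiag (\<lambda>a. M a (a + g))) (Pmat g)"
    by (auto simp: mdiag_mmult_Pmat graded_mat_def fun_eq_iff)
  then show "M \<in> graded_comp g"
    by (auto simp: graded_comp_def)
qed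

lemma graded_mat_mmult:
  assumes M: "graded_mat g M" and N: "graded_mat h N"
  shows "graded_mat (g + h) (mmult M N)"
  unfolding graded_mat_def mmult_def
proof (intro allI impI sum.neutral ballI)
  fix a b c assume ne: "c \<noteq> a + (g + h)"
  show "M a b * N b c = 0"
  proof (cases "b = a + g")
    case True
    then have "c \<noteq> b + h"
      using ne by (simp add: add.assoc)
    then show ?thesis
      using N by (simp add: graded_mat_def)
  next
    case False
    then show ?thesis
      using M by (simp add: graded_mat_def)
  qed
qed

lemma graded_mat_mone: "graded_mat 0 mone"
  by (simp add: graded_mat_def mone_def)

lemma graded_mat_mtrans: "graded_mat g M \<Longrightarrow> graded_mat (- g) (mtrans M)"
  unfolding graded_mat_def mtrans_def by (metis add.assoc add.right_inverse add.right_neutral)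

lemma graded_mat_meval: "(\<And>i g. graded_mat g (A i g)) \<Longrightarrow> graded_mat (ldeg l) (meval A l)"
  by (cases l) (auto simp: graded_mat_mtrans)

lemma graded_mat_weval: "(\<And>i g. graded_mat g (A i g)) \<Longrightarrow> graded_mat (wdeg w) (weval A w)"
  by (induction w) (auto simp: graded_mat_mone graded_mat_mmult graded_mat_meval)

lemma graded_mat_feval:
  assumes A: "\<And>i g. graded_mat g (A i g)" and h: "homogeneous g p"
  shows "graded_mat g (feval A p)"
  unfolding graded_mat_def feval_def
proof (intro allI impI sum.neutral ballI)
  fix a c w assume "c \<noteq> a + g" and "w \<in> supp p"
  then show "of_rat (p w) * weval A w a c = 0"
    using graded_mat_weval[OF A, of w] h by (simp add: graded_mat_def homogeneous_def)
qed

lemma graded_mat_0_commute: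
  fixes M N :: "('g::{group_add,finite}) cmat"
  assumes "graded_mat 0 M" "graded_mat 0 N"
  shows "mmult M N = mmult N M"
proof -
  have diag: "mmult P Q a c = (if c = a then P a a * Q a a else 0)"
    if "graded_mat 0 P" "graded_mat 0 Q" for P Q :: "'g cmat" and a c
  proof -
    have "mmult P Q a c = (\<Sum>b\<in>UNIV. if b = a then P a a * Q a c else 0)"
      unfolding mmult_def by (rule sum.cong) (use that in \<open>auto simp: graded_mat_def\<close>)
    then show ?thesis
      using that by (auto simp: graded_mat_def)
  qed
  show ?thesis
    using diag[OF assms] diag[OF assms(2,1)] by (auto simp: fun_eq_iff mult.commute)
qed

lemma graded_mat_0_mtrans: "graded_mat 0 M \<Longrightarrow> mtrans M = M"
  by (auto simp: graded_mat_def mtrans_def fun_eq_iff) metis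

lemma tstar_ideal_star_identities:
  "tstar_ideal (star_identities :: ('g::{group_add,finite}) fa set)"
  unfolding tstar_ideal_def
proof (intro conjI ballI allI impI)
  show "star_identities \<subseteq> FA" and "fa_zero \<in> star_identities"
    by (auto simp: star_identities_def FA_zero)
next
  fix a b :: "'g fa" assume ab: "a \<in> star_identities" "b \<in> star_identities"
  then have "a \<in> FA" "b \<in> FA"
    by (simp_all add: star_identities_def)
  moreover from this have "finite (supp a)" "finite (supp b)"
    by (simp_all add: FA_iff)
  ultimately show "fa_add a b \<in> star_identities"
    using ab by (auto simp: star_identities_def FA_add feval_add fun_eq_iff mzero_def)
next
  fix a :: "'g fa" and c assume "a \<in> star_identities"
  then show "fa_smult c a \<in> star_identities"
    by (auto simp: star_identities_def FA_smult feval_smult fun_eq_iff mzero_def)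
next
  fix a p :: "'g fa" assume a: "a \<in> star_identities" and p: "p \<in> FA"
  then have "a \<in> FA"
    by (simp add: star_identities_def)
  with p have "fa_mult p a \<in> FA" "fa_mult a p \<in> FA" "finite (supp a)" "finite (supp p)"
    by (simp_all add: FA_mult) (simp_all add: FA_iff)
  then show "fa_mult p a \<in> star_identities" "fa_mult a p \<in> star_identities"
    using a by (simp_all add: star_identities_def feval_mult)
next
  fix a :: "'g fa" assume a: "a \<in> star_identities"
  then have "a \<in> FA"
    by (simp add: star_identities_def)
  then have "fa_star a \<in> FA" "finite (supp a)"
    by (simp_all add: FA_star) (simp add: FA_iff)
  then show "fa_star a \<in> star_identities"
    using a by (simp add: star_identities_def feval_star)
next
  fix h :: "nat \<Rightarrow> 'g \<Rightarrow> 'g fa" and a :: "'g fa"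
  assume h: "\<forall>i g. 1 \<le> i \<longrightarrow> h i g \<in> FA \<and> homogeneous g (h i g)" and a: "a \<in> star_identities"
  have hFA: "\<And>i g. 1 \<le> i \<Longrightarrow> h i g \<in> FA" and aFA: "a \<in> FA"
    using h a by (auto simp: star_identities_def)
  show "subst h a \<in> star_identities"
    unfolding star_identities_def
  proof (intro CollectI conjI allI impI subst_FA[OF hFA aFA])
    fix A :: "nat \<Rightarrow> 'g \<Rightarrow> 'g cmat" assume A: "\<forall>i g. A i g \<in> graded_comp g"
    then have "graded_mat g (subst_eval A h i g)" for i g
      using h by (auto simp: subst_eval_def graded_comp_iff intro: graded_mat_feval)
    then show "feval A (subst h a) = mzero"
      using a by (simp add: feval_subst[OF hFA aFA] star_identities_def graded_comp_iff)
  qed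
qed

lemma star_gens_subset_star_identities:
  "star_gens \<subseteq> (star_identities :: ('g::{group_add,finite}) fa set)"
proof
  fix f :: "'g fa" assume "f \<in> star_gens"
  then consider i j where "1 \<le> i" "1 \<le> j"
      "f = fa_diff (fa_mon [X i 0, X j 0]) (fa_mon [X j 0, X i 0])"
    | i where "1 \<le> i" "f = fa_diff (fa_mon [X i 0]) (fa_mon [Xs i 0])"
    unfolding star_gens_def by (auto simp: fa_var_eq_fa_mon fa_mult_fa_mon)
  then show "f \<in> star_identities"
  proof cases
    case 1
    have "feval A f = mzero" if "\<forall>i g. A i g \<in> graded_comp g" for A
    proof -
      have "graded_mat 0 (A i 0)" "graded_mat 0 (A j 0)"
        using that graded_comp_iff by blast+
      then show ?thesis
        unfolding 1(3) using graded_mat_0_commute by (simp add: feval_diff mzero_def fun_eq_iff)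
    qed
    then show ?thesis
      using 1 by (simp add: star_identities_def FA_diff fa_mon_FA)
  next
    case 2
    have "feval A f = mzero" if "\<forall>i g. A i g \<in> graded_comp g" for A
    proof -
      have "mtrans (A i 0) = A i 0"
        using that graded_comp_iff graded_mat_0_mtrans by blast
      then show ?thesis
        unfolding 2(2) by (simp add: feval_diff mzero_def fun_eq_iff)
    qed
    then show ?thesis
      using 2 by (simp add: star_identities_def FA_diff fa_mon_FA)
  qed
qed

section \<open>Words with the same walk are congruent modulo the generated ideal\<close>

definition congruent_mod :: "'g fa set \<Rightarrow> 'g letter list \<Rightarrow> 'g letter list \<Rightarrow> bool" where
  "congruent_mod J u v \<longleftrightarrow> admissible u \<and> admissible v \<and> fa_diff (fa_mon u) (fa_mon v) \<in> J"

definition subst_pair :: "'g::zero letter list \<Rightarrow> 'g letter list \<Rightarrow> nat \<Rightarrow> 'g \<Rightarrow> 'g fa" where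
  "subst_pair b c = (\<lambda>i g. if i = 1 \<and> g = 0 then fa_mon b
     else if i = 2 \<and> g = 0 then fa_mon c else fa_zero)"

lemma subst_pair_admissible:
  assumes "admissible b" "admissible c" "wdeg b = 0" "wdeg c = 0"
  shows "\<forall>i g. 1 \<le> i \<longrightarrow> subst_pair b c i g \<in> FA \<and> homogeneous g (subst_pair b c i g)"
  using assms by (auto simp: subst_pair_def fa_mon_FA FA_zero homogeneous_def)

lemma walk_congruence_congruent_mod:
  fixes J :: "('g::group_add) fa set"
  assumes J: "tstar_ideal J" and gens: "star_gens \<subseteq> J"
  shows "walk_congruence (congruent_mod J)"
proof
  fix u :: "'g letter list" assume "admissible u"
  then show "congruent_mod J u u"
    using J by (simp add: congruent_mod_def tstar_ideal_def fa_diff_def fa_zero_def)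
next
  fix u v :: "'g letter list" assume uv: "congruent_mod J u v"
  then have "fa_smult (-1) (fa_diff (fa_mon u) (fa_mon v)) \<in> J"
    using J by (simp add: congruent_mod_def tstar_ideal_def)
  then show "congruent_mod J v u"
    using uv by (simp add: congruent_mod_def fa_diff_def fa_smult_def)
next
  fix u v w :: "'g letter list" assume uvw: "congruent_mod J u v" "congruent_mod J v w"
  then have "fa_add (fa_diff (fa_mon u) (fa_mon v)) (fa_diff (fa_mon v) (fa_mon w)) \<in> J"
    using J by (simp add: congruent_mod_def tstar_ideal_def)
  then show "congruent_mod J u w"
    using uvw by (simp add: congruent_mod_def fa_diff_def fa_add_def)
next
  fix u v x y :: "'g letter list"
  assume uv: "congruent_mod J u v" and x: "admissible x" and y: "admissible y"
  have "fa_mult (fa_mon x) (fa_mult (fa_diff (fa_mon u) (fa_mon v)) (fa_mon y)) \<in> J"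
    using J uv x y by (simp add: tstar_ideal_def congruent_mod_def fa_mon_FA)
  then show "congruent_mod J (x @ u @ y) (x @ v @ y)"
    using uv x y
    by (simp add: congruent_mod_def fa_mult_diff_left fa_mult_diff_right fa_mult_fa_mon)
next
  fix b c :: "'g letter list"
  assume "admissible b" "admissible c" "wdeg b = 0" "wdeg c = 0"
  note subst = subst_pair_admissible[OF this]
  let ?comm = "fa_diff (fa_mon [X 1 (0::'g), X 2 0]) (fa_mon [X 2 0, X 1 0])"
  have "?comm \<in> star_gens"
    unfolding star_gens_def by (rule UnI1, rule CollectI, rule exI[of _ 1], rule exI[of _ 2])
      (simp add: fa_var_eq_fa_mon fa_mult_fa_mon)
  then have "subst (subst_pair b c) ?comm \<in> J"
    using J gens subst by (auto simp: tstar_ideal_def)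
  moreover have "subst (subst_pair b c) ?comm = fa_diff (fa_mon (b @ c)) (fa_mon (c @ b))"
    by (simp add: subst_fa_diff_fa_mon subst_pair_def fa_one_eq_fa_mon fa_mult_fa_mon)
  ultimately show "congruent_mod J (b @ c) (c @ b)"
    using \<open>admissible b\<close> \<open>admissible c\<close> by (simp add: congruent_mod_def)
next
  fix b :: "'g letter list"
  assume b: "admissible b" "wdeg b = 0"
  note subst = subst_pair_admissible[OF b(1) b(1) b(2) b(2)]
  let ?sym = "fa_diff (fa_mon [X 1 (0::'g)]) (fa_mon [Xs 1 0])"
  have "?sym \<in> star_gens"
    unfolding star_gens_def
    by (rule UnI2, rule CollectI, rule exI[of _ 1]) (simp add: fa_var_eq_fa_mon)
  then have "subst (subst_pair b b) ?sym \<in> J"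
    using J gens subst by (auto simp: tstar_ideal_def)
  moreover have "subst (subst_pair b b) ?sym = fa_diff (fa_mon b) (fa_mon (word_star b))"
    by (simp add: subst_fa_diff_fa_mon subst_pair_def fa_one_eq_fa_mon fa_mult_fa_mon
        fa_star_fa_mon)
  ultimately show "congruent_mod J b (word_star b)"
    using \<open>admissible b\<close> by (simp add: congruent_mod_def)
qed

lemma same_walk_diff_in_tstar_ideal:
  assumes "tstar_ideal J" "star_gens \<subseteq> J" "admissible u" "admissible v"
    and "walk_edges 0 u = walk_edges 0 v" "wdeg u = wdeg v"
  shows "fa_diff (fa_mon u) (fa_mon v) \<in> J"
  using walk_congruence.rel_if_same_walk[OF walk_congruence_congruent_mod[OF assms(1,2)] assms(3-6)]
  by (simp add: congruent_mod_def)

section \<open>Graded identities have vanishing coefficient sums on each walk class\<close>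

text \<open>The generic elements \<open>diag(d) P\<^sub>h\<close> of the crossed-product grading, with one weight
  per edge of the Cayley multigraph.\<close>

definition edge_weighted :: "(nat \<times> 'g \<times> 'g \<Rightarrow> complex) \<Rightarrow> nat \<Rightarrow> 'g::group_add \<Rightarrow> 'g cmat" where
  "edge_weighted d i h = (\<lambda>a c. if c = a + h then d (i, h, a) else 0)"

lemma edge_weighted_graded_comp: "edge_weighted d i h \<in> graded_comp h"
  by (simp add: graded_comp_iff graded_mat_def edge_weighted_def)

lemma weval_edge_weighted:
  "weval (edge_weighted d) w a c
     = (if c = a + wdeg w then \<Prod>e\<in>#walk_edges a w. d e else (0::complex))"
proof (induction w arbitrary: a)
  case Nil
  then show ?case
    by (simp add: mone_def eq_commute)
next
  case (Cons l w)
  show ?case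
  proof (cases l)
    case (X i h)
    have "weval (edge_weighted d) (l # w) a c
        = (\<Sum>b\<in>UNIV. if b = a + h then d (i, h, a) * weval (edge_weighted d) w b c else 0)"
      unfolding weval_Cons mmult_def using X by (intro sum.cong) (auto simp: edge_weighted_def)
    then show ?thesis
      using Cons.IH[of "a + h"] X by (simp add: add.assoc)
  next
    case (Xs i h)
    have "weval (edge_weighted d) (l # w) a c
        = (\<Sum>b\<in>UNIV. if b = a - h then d (i, h, a - h) * weval (edge_weighted d) w b c else 0)"
      unfolding weval_Cons mmult_def using Xs
      by (intro sum.cong) (auto simp: edge_weighted_def mtrans_def eq_diff_eq)
    then show ?thesis
      using Cons.IH[of "a - h"] Xs
      by (simp add: add.assoc diff_conv_add_uminus del: add_uminus_conv_diff)
  qed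
qed

text \<open>Edges are coded by distinct primes, so that by unique factorisation the product of the
  codes along a walk determines its multiset of edges.\<close>

definition edge_code :: "nat \<times> ('g::finite) \<times> 'g \<Rightarrow> nat" where
  "edge_code e = enumerate {p. prime p} (to_nat_on (UNIV :: (nat \<times> 'g \<times> 'g) set) e)"

definition walk_code :: "(nat \<times> ('g::finite) \<times> 'g) multiset \<Rightarrow> nat" where
  "walk_code M = (\<Prod>e\<in>#M. edge_code e)"

lemma prime_edge_code: "prime (edge_code e)"
  using enumerate_in_set[OF primes_infinite] by (simp add: edge_code_def)

lemma inj_edge_code: "inj (edge_code :: nat \<times> ('g::finite) \<times> 'g \<Rightarrow> nat)"
proof -
  have "countable (UNIV :: (nat \<times> 'g \<times> 'g) set)"
    using countable_finite[of "UNIV :: ('g \<times> 'g) set"] by simp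
  then have "inj (to_nat_on (UNIV :: (nat \<times> 'g \<times> 'g) set))"
    by (rule inj_on_to_nat_on)
  then show ?thesis
    unfolding edge_code_def using inj_compose[OF inj_enumerate[OF primes_infinite]]
    by (simp add: comp_def)
qed

lemma inj_walk_code: "inj (walk_code :: (nat \<times> ('g::finite) \<times> 'g) multiset \<Rightarrow> nat)"
proof
  fix M N :: "(nat \<times> 'g \<times> 'g) multiset"
  assume "walk_code M = walk_code N"
  moreover have "prime_factorization (walk_code M) = image_mset edge_code M" for M
    unfolding walk_code_def
    by (rule prime_factorization_prod_mset_primes) (auto simp: prime_edge_code)
  ultimately have "image_mset edge_code M = image_mset edge_code N"
    by metis
  then show "M = N"
    using image_mset_eq_image_mset_plusD[of edge_code M N "{#}"]
      inj_on_subset[OF inj_edge_code subset_UNIV] by auto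
qed

lemma prod_mset_of_nat_power:
  "(\<Prod>x\<in>#M. (of_nat (f x) :: 'a::comm_semiring_1) ^ t) = of_nat (\<Prod>x\<in>#M. f x) ^ t"
  by (induction M) (simp_all add: power_mult_distrib)

text \<open>Vandermonde: evaluate at the polynomial vanishing at all values except \<open>z\<close>.\<close>

lemma power_sums_vanish_imp_coeff_sums_zero:
  fixes c x :: "'a \<Rightarrow> complex"
  assumes S: "finite S" and sums: "\<And>t. (\<Sum>s\<in>S. c s * x s ^ t) = 0"
  shows "(\<Sum>s\<in>{s\<in>S. x s = z}. c s) = 0"
proof -
  define q where "q = (\<Prod>m\<in>x ` S - {z}. [:- m, 1:])"
  have poly_q: "poly q y = (\<Prod>m\<in>x ` S - {z}. y - m)" for y
    by (simp add: q_def poly_prod)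
  have "(\<Sum>s\<in>S. c s * poly q (x s)) = (\<Sum>i\<le>degree q. coeff q i * (\<Sum>s\<in>S. c s * x s ^ i))"
    by (simp add: poly_altdef sum_distrib_left mult_ac sum.swap[of _ S])
  also have "\<dots> = 0"
    using sums by simp
  finally have "(\<Sum>s\<in>S. c s * poly q (x s)) = 0" .
  moreover have "(\<Sum>s\<in>S. c s * poly q (x s)) = (\<Sum>s\<in>{s\<in>S. x s = z}. c s) * poly q z"
  proof -
    have "(\<Sum>s\<in>S. c s * poly q (x s)) = (\<Sum>s\<in>S. (if x s = z then c s else 0) * poly q z)"
      using S by (intro sum.cong refl) (auto simp: poly_q prod_zero_iff)
    then show ?thesis
      using S by (simp add: sum.inter_filter sum_distrib_right)
  qed
  moreover have "poly q z \<noteq> 0"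
    using S by (simp add: poly_q)
  ultimately show ?thesis
    by simp
qed

lemma star_identity_walk_class_sum:
  fixes f :: "('g::{group_add,finite}) fa"
  assumes f: "f \<in> star_identities"
  shows "(\<Sum>w\<in>{w\<in>supp f. (wdeg w, walk_edges 0 w) = k}. f w) = 0"
proof -
  obtain g M where k: "k = (g, M)"
    by fastforce
  define S where "S = {w\<in>supp f. wdeg w = g}"
  have fin: "finite (supp f)"
    using f by (simp add: star_identities_def FA_iff)
  then have S: "finite S"
    by (simp add: S_def)
  define code :: "'g letter list \<Rightarrow> complex"
    where "code w = of_nat (walk_code (walk_edges 0 w))" for w
  have "(\<Sum>w\<in>S. of_rat (f w) * code w ^ t) = 0" for t
  proof -
    let ?A = "edge_weighted (\<lambda>e. of_nat (edge_code e) ^ t)"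
    have "(\<Sum>w\<in>S. of_rat (f w) * code w ^ t) = feval ?A f 0 g"
      unfolding feval_def weval_edge_weighted S_def code_def walk_code_def
      by (rule sum.mono_neutral_cong_left) (use fin in \<open>auto simp: S_def prod_mset_of_nat_power\<close>)
    also have "feval ?A f = mzero"
      using f by (simp add: star_identities_def edge_weighted_graded_comp)
    finally show ?thesis
      by (simp add: mzero_def)
  qed
  then have zero: "(\<Sum>w\<in>{w\<in>S. code w = code w0}. of_rat (f w)) = (0::complex)" for w0
    by (rule power_sums_vanish_imp_coeff_sums_zero[OF S])
  have same_class: "{w\<in>S. code w = code w0} = {w\<in>supp f. (wdeg w, walk_edges 0 w) = k}"
    if "w0 \<in> supp f" "(wdeg w0, walk_edges 0 w0) = k" for w0
    using that by (auto simp: S_def code_def k dest: injD[OF inj_walk_code])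
  show ?thesis
  proof (cases "\<exists>w0\<in>supp f. (wdeg w0, walk_edges 0 w0) = k")
    case True
    then obtain w0 where "w0 \<in> supp f" "(wdeg w0, walk_edges 0 w0) = k"
      by blast
    then have "of_rat (\<Sum>w\<in>{w\<in>supp f. (wdeg w, walk_edges 0 w) = k}. f w) = (0::complex)"
      using zero[of w0] same_class by (simp add: of_rat_sum)
    then show ?thesis
      by simp
  next
    case False
    then have "{w\<in>supp f. (wdeg w, walk_edges 0 w) = k} = {}"
      by blast
    then show ?thesis
      by (simp only: sum.empty)
  qed
qed

lemma tstar_ideal_sum:
  assumes J: "tstar_ideal J" and K: "finite K" and f: "\<And>j. j \<in> K \<Longrightarrow> f j \<in> J"
  shows "(\<lambda>x. \<Sum>j\<in>K. c j * f j x) \<in> J"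
  using K f
proof (induction K rule: finite_induct)
  case empty
  then show ?case
    using J by (simp add: tstar_ideal_def fa_zero_def)
next
  case (insert j K)
  then have "fa_add (fa_smult (c j) (f j)) (\<lambda>x. \<Sum>j\<in>K. c j * f j x) \<in> J"
    using J by (simp add: tstar_ideal_def)
  then show ?case
    using insert by (simp add: fa_add_def fa_smult_def)
qed

text \<open>Subtracting from each monomial of \<open>f\<close> a fixed representative of its class leaves \<open>f\<close>
  unchanged, since the coefficients of each class sum to zero.\<close>

lemma in_tstar_ideal_if_class_sums_vanish:
  assumes J: "tstar_ideal J" and f: "finite (supp f)"
    and diff: "\<And>u v. u \<in> supp f \<Longrightarrow> v \<in> supp f \<Longrightarrow> key u = key v
      \<Longrightarrow> fa_diff (fa_mon u) (fa_mon v) \<in> J"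
    and sums: "\<And>k. (\<Sum>w\<in>{w\<in>supp f. key w = k}. f w) = 0"
  shows "f \<in> J"
proof -
  define rep where "rep w = (SOME r. r \<in> supp f \<and> key r = key w)" for w
  have rep: "rep w \<in> supp f \<and> key (rep w) = key w" if "w \<in> supp f" for w
    unfolding rep_def by (rule someI[of _ w]) (use that in auto)
  have reps: "(\<Sum>w\<in>supp f. f w * fa_mon (rep w) x) = 0" for x
  proof -
    have "(\<Sum>w\<in>supp f. f w * fa_mon (rep w) x) = (\<Sum>w\<in>{w\<in>supp f. rep w = x}. f w)"
      using f by (simp add: sum.inter_filter fa_mon_def if_distrib eq_commute cong: if_cong)
    also have "\<dots> = 0"
    proof (cases "\<exists>w0\<in>supp f. rep w0 = x")
      case True
      then obtain w0 where w0: "w0 \<in> supp f" "rep w0 = x"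
        by blast
      have "rep w = rep w0 \<longleftrightarrow> key w = key w0" if "w \<in> supp f" for w
      proof
        show "rep w = rep w0 \<Longrightarrow> key w = key w0"
          using rep[OF that] rep[OF w0(1)] by metis
        show "key w = key w0 \<Longrightarrow> rep w = rep w0"
          by (simp add: rep_def)
      qed
      then have "{w\<in>supp f. rep w = x} = {w\<in>supp f. key w = key w0}"
        using w0 by auto
      then show ?thesis
        using sums by simp
    next
      case False
      then have "{w\<in>supp f. rep w = x} = {}"
        by auto
      then show ?thesis
        by (simp only: sum.empty)
    qed
    finally show ?thesis .
  qed
  have "f x = (\<Sum>w\<in>supp f. f w * fa_diff (fa_mon w) (fa_mon (rep w)) x)" for x
  proof -
    have "f x = (\<Sum>w\<in>supp f. f w * fa_mon w x)"
      by (rule fun_cong[OF fa_expand[OF f subset_refl]])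
    also have "\<dots> = (\<Sum>w\<in>supp f. f w * fa_mon w x) - (\<Sum>w\<in>supp f. f w * fa_mon (rep w) x)"
      using reps[of x] by simp
    also have "\<dots> = (\<Sum>w\<in>supp f. f w * fa_diff (fa_mon w) (fa_mon (rep w)) x)"
      by (simp add: fa_diff_def right_diff_distrib sum_subtractf)
    finally show ?thesis .
  qed
  then have "f = (\<lambda>x. \<Sum>w\<in>supp f. f w * fa_diff (fa_mon w) (fa_mon (rep w)) x)"
    by (rule ext)
  also have "\<dots> \<in> J"
    by (intro tstar_ideal_sum[OF J f]) (use diff rep in auto)
  finally show ?thesis .
qed

theorem mainTheorem7:
  shows "(star_identities :: ('g::{group_add,finite}) fa set) = tstar_gen star_gens"
proof
  show "tstar_gen star_gens \<subseteq> star_identities"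
    unfolding tstar_gen_def using tstar_ideal_star_identities star_gens_subset_star_identities
    by blast
next
  have "f \<in> J" if f: "f \<in> star_identities" and J: "tstar_ideal J" "star_gens \<subseteq> J"
    for f :: "'g fa" and J
  proof (rule in_tstar_ideal_if_class_sums_vanish[OF J(1),
        where key = "\<lambda>w. (wdeg w, walk_edges 0 w)"])
    show "finite (supp f)"
      using f by (simp add: star_identities_def FA_iff)
    show "fa_diff (fa_mon u) (fa_mon v) \<in> J"
      if "u \<in> supp f" "v \<in> supp f" "(wdeg u, walk_edges 0 u) = (wdeg v, walk_edges 0 v)" for u v
      using that f same_walk_diff_in_tstar_ideal[OF J] by (simp add: star_identities_def FA_iff)
    show "(\<Sum>w\<in>{w\<in>supp f. (wdeg w, walk_edges 0 w) = k}. f w) = 0" for k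
      using star_identity_walk_class_sum[OF f] .
  qed
  then show "(star_identities :: 'g fa set) \<subseteq> tstar_gen star_gens"
    unfolding tstar_gen_def by blast
qed

end
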